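(* Fix $-1\le\eta_1<\eta_2\le1$ and $\delta>0$. For all $x\ge2$ and $Z\ge2$, $$ \sum_{s\in S(-1,1;x)}T_Z(W(s))\ll_{\delta,\mathbb{K}} x^{1/2+\delta}\left(\log Z+\frac{x\log x}{Z}\right). $$ In particular, for $Z=x$ the sum is $\ll_{\delta,\mathbb{K}} x^{1/2+2\delta}$.
   Context: $\mathbb{K}=\mathbb{Q}(\sqrt d)$ is a real quadratic field of class number one, $\epsilon>1$ its fundamental unit, $\sigma_1,\sigma_2$ the identity and conjugate embeddings, $\mathcal{N}(a)=|N_{\mathbb{K}/\mathbb{Q}}(a)|$. $S(-1,1;x)=\{s\in\mathcal{O}_{\mathbb{K}}: \epsilon^{-1}|\sigma_2(s)|<|\sigma_1(s)|\le\epsilon|\sigma_2(s)|,\ \sigma_1(s)>0,\ \mathcal{N}(s)\le x\}$. For $s\ne0$, $W(s)=\log|\sigma_1(s)/\sigma_2(s)|/(2\log\epsilon)$ (so $W(s)\in(-1/2,1/2]$ on this set). $T_Z(W)=\min\{\log Z,\ 1/(Z\|W-\eta_1/2\|)+1/(Z\|W-\eta_2/2\|)\}$, where $\|X\|$ is the distance of $X$ to the nearest integer and the minimum equals $\log Z$ when a denominator vanishes. *)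

theory Defs
  imports Complex_Main "HOL-Computational_Algebra.Squarefree"
begin

text \<open>K = Q(sqrt d), d > 1 squarefree, realised inside the reals via the identity embedding sigma_1.\<close>
definition real_quadratic_field :: "int \<Rightarrow> bool" where
  "real_quadratic_field d \<longleftrightarrow> d > 1 \<and> squarefree d"

definition omegaK :: "int \<Rightarrow> real" where
  "omegaK d = (if d mod 4 = 1 then (1 + sqrt (real_of_int d)) / 2 else sqrt (real_of_int d))"

definition OK :: "int \<Rightarrow> real set" where
  "OK d = {real_of_int a + real_of_int b * omegaK d | a b. True}"

definition qconj :: "int \<Rightarrow> real \<Rightarrow> real" where
  "qconj d s = (THE t. \<exists>a b :: rat. s = of_rat a + of_rat b * sqrt (real_of_int d)
                                   \<and> t = of_rat a - of_rat b * sqrt (real_of_int d))"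

definition normK :: "int \<Rightarrow> real \<Rightarrow> real" where
  "normK d s = \<bar>s * qconj d s\<bar>"

definition OK_units :: "int \<Rightarrow> real set" where
  "OK_units d = {u \<in> OK d. u \<noteq> 0 \<and> 1 / u \<in> OK d}"

definition is_fundamental_unit :: "int \<Rightarrow> real \<Rightarrow> bool" where
  "is_fundamental_unit d \<epsilon> \<longleftrightarrow> \<epsilon> \<in> OK_units d \<and> \<epsilon> > 1 \<and> (\<forall>u \<in> OK_units d. u > 1 \<longrightarrow> \<epsilon> \<le> u)"

definition is_OK_ideal :: "int \<Rightarrow> real set \<Rightarrow> bool" where
  "is_OK_ideal d I \<longleftrightarrow> I \<subseteq> OK d \<and> 0 \<in> I \<and> (\<forall>x\<in>I. \<forall>y\<in>I. x + y \<in> I)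
                          \<and> (\<forall>r\<in>OK d. \<forall>x\<in>I. r * x \<in> I)"

definition class_number_one :: "int \<Rightarrow> bool" where
  "class_number_one d \<longleftrightarrow> (\<forall>I. is_OK_ideal d I \<longrightarrow> (\<exists>g\<in>OK d. I = {r * g | r. r \<in> OK d}))"

definition S_set :: "int \<Rightarrow> real \<Rightarrow> real \<Rightarrow> real set" where
  "S_set d \<epsilon> x = {s \<in> OK d. \<bar>qconj d s\<bar> / \<epsilon> < \<bar>s\<bar> \<and> \<bar>s\<bar> \<le> \<epsilon> * \<bar>qconj d s\<bar>
                       \<and> s > 0 \<and> normK d s \<le> x}"

definition W :: "int \<Rightarrow> real \<Rightarrow> real \<Rightarrow> real" where
  "W d \<epsilon> s = ln \<bar>s / qconj d s\<bar> / (2 * ln \<epsilon>)"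

definition dist_int :: "real \<Rightarrow> real" where
  "dist_int X = \<bar>X - of_int (round X)\<bar>"

definition T_Z :: "real \<Rightarrow> real \<Rightarrow> real \<Rightarrow> real \<Rightarrow> real" where
  "T_Z Z \<eta>1 \<eta>2 w =
     (if dist_int (w - \<eta>1 / 2) = 0 \<or> dist_int (w - \<eta>2 / 2) = 0 then ln Z
      else min (ln Z) (1 / (Z * dist_int (w - \<eta>1 / 2)) + 1 / (Z * dist_int (w - \<eta>2 / 2))))"

end

theory Submission
  imports Defs "HOL-Analysis.Harmonic_Numbers"
begin

text \<open>Write \<open>s = (p + q sqrt d) / 2\<close> with \<open>p, q\<close> integers. On \<open>S(-1,1;x)\<close> both \<open>s\<close> and
  \<open>\<bar>\<sigma>\<^sub>2(s)\<bar>\<close> are at most \<open>sqrt (\<epsilon> x)\<close>, and \<open>W(s) \<in> [a, b]\<close> confines \<open>(s, \<bar>\<sigma>\<^sub>2(s)\<bar>)\<close> to a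
  sector of opening \<open>O(b - a)\<close>. In the coordinates \<open>s \<plusminus> \<bar>\<sigma>\<^sub>2(s)\<bar>\<close>, which are \<open>p\<close> and
  \<open>q sqrt d\<close> in some order, this sector is a strip, so it contains \<open>O(x (b - a) + sqrt x)\<close>
  elements of \<open>S(-1,1;x)\<close>. Cutting the range of \<open>\<parallel>W - \<eta>/2\<parallel>\<close> into intervals of length \<open>1/Z\<close>,
  on the \<open>k\<close>-th of which the summand is at most \<open>1/k\<close>, bounds the sum by
  \<open>O((x/Z + sqrt x) log Z)\<close>; both claimed estimates follow from this.\<close>

lemma sqrt_squarefree_not_rat:
  fixes d :: int
  assumes "d > 1" and "squarefree d"
  shows "sqrt (of_int d) \<notin> \<rat>"
proof
  assume "sqrt (of_int d) \<in> \<rat>"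
  then obtain a b :: int where b: "b > 0" and cop: "coprime a b"
    and eq: "sqrt (of_int d) = of_int a / of_int b"
    by (rule Rats_cases') blast
  have "real_of_int d = (of_int a / of_int b)^2"
    using eq assms(1) by (metis of_int_0_le_iff less_imp_le less_trans zero_less_one real_sqrt_pow2)
  then have "real_of_int d * (of_int b)^2 = (of_int a)^2" using b by (simp add: field_simps)
  then have deq: "d * b^2 = a^2" by (metis of_int_eq_iff of_int_mult of_int_power)
  have "b^2 dvd a^2" using deq by (metis dvd_triv_right)
  moreover have "coprime (b^2) (a^2)" using cop by (simp add: coprime_commute)
  ultimately have "is_unit (b^2)" using coprime_absorb_left by blast
  then have "d = a^2" using deq by simp
  then have "a dvd 1" using assms(2) squarefreeD by (metis dvd_refl)
  then have "a^2 = 1" by (metis power2_abs zdvd1_eq one_power2)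
  then show False using \<open>d = a^2\<close> assms(1) by simp
qed

lemma rat_coords_unique:
  assumes "r \<notin> \<rat>" and "of_rat a + of_rat b * r = of_rat a' + of_rat b' * r"
  shows "a = a' \<and> b = b'"
proof (cases "b = b'")
  case True
  then show ?thesis using assms(2) by simp
next
  case False
  have "(of_rat b - of_rat b') * r = of_rat a' - of_rat a"
    using assms(2) by (simp add: algebra_simps)
  then have "r = of_rat ((a' - a) / (b - b'))"
    using False by (simp add: field_simps of_rat_diff of_rat_divide)
  with assms(1) show ?thesis by (metis Rats_of_rat)
qed

lemma qconj_rat_coords:
  assumes "real_quadratic_field d"
  shows "qconj d (of_rat a + of_rat b * sqrt (of_int d)) = of_rat a - of_rat b * sqrt (of_int d)"
proof -
  have "sqrt (of_int d) \<notin> \<rat>"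
    using assms sqrt_squarefree_not_rat by (simp add: real_quadratic_field_def)
  then show ?thesis
    unfolding qconj_def by (intro the_equality) (auto dest: rat_coords_unique)
qed

lemma OK_half_integer_coords:
  assumes "real_quadratic_field d" and "s \<in> OK d"
  obtains p q :: int where "s = (p + q * sqrt (of_int d)) / 2"
    and "qconj d s = (p - q * sqrt (of_int d)) / 2"
proof -
  obtain a b :: int where s: "s = a + b * omegaK d" using assms(2) unfolding OK_def by blast
  define p q :: int where "p = (if d mod 4 = 1 then 2 * a + b else 2 * a)"
    and "q = (if d mod 4 = 1 then b else 2 * b)"
  have of_rat_half: "of_rat (of_int k / 2) = (of_int k / 2 :: real)" for k :: int
    by (simp add: of_rat_divide)
  have "s = (p + q * sqrt (of_int d)) / 2"
    by (simp add: s omegaK_def p_def q_def field_simps)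
  moreover have "qconj d s = (p - q * sqrt (of_int d)) / 2"
    using calculation qconj_rat_coords[OF assms(1), of "of_int p / 2" "of_int q / 2"]
    by (simp add: of_rat_half add_divide_distrib diff_divide_distrib)
  ultimately show ?thesis by (rule that)
qed

lemma card_lattice_strip_le:
  fixes T :: "(int \<times> int) set" and M l :: real and L :: "int \<Rightarrow> real"
  assumes T: "\<And>p q. (p, q) \<in> T \<Longrightarrow> 0 \<le> p \<and> p \<le> M \<and> L p \<le> q \<and> q \<le> L p + l"
    and "0 \<le> l" and "0 \<le> M"
  shows "finite T" and "card T \<le> (M + 1) * (l + 1)"
proof -
  define B where "B p = {\<lceil>L p\<rceil>..\<lfloor>L p + l\<rfloor>}" for p
  define G where "G = Sigma {0..\<lfloor>M\<rfloor>} B"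
  have sub: "T \<subseteq> G"
  proof
    fix z assume "z \<in> T"
    then obtain p q where z: "z = (p, q)" and "(p, q) \<in> T" by (cases z) auto
    with T have "0 \<le> p" "p \<le> \<lfloor>M\<rfloor>" "\<lceil>L p\<rceil> \<le> q" "q \<le> \<lfloor>L p + l\<rfloor>"
      by (auto simp: le_floor_iff ceiling_le_iff)
    then show "z \<in> G" unfolding G_def B_def z by auto
  qed
  have fin: "finite G" unfolding G_def B_def by auto
  then show "finite T" using finite_subset[OF sub] by blast
  have card_B: "card (B p) \<le> l + 1" for p
  proof -
    have "card (B p) = nat (\<lfloor>L p + l\<rfloor> - \<lceil>L p\<rceil> + 1)" unfolding B_def by simp
    also have "\<dots> \<le> l + 1"
      using of_int_floor_le[of "L p + l"] le_of_int_ceiling[of "L p"] \<open>0 \<le> l\<close> by linarith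
    finally show ?thesis .
  qed
  have "real (card T) \<le> card G" using card_mono[OF fin sub] by simp
  also have "\<dots> = (\<Sum>p\<in>{0..\<lfloor>M\<rfloor>}. real (card (B p)))"
    unfolding G_def B_def by (subst card_SigmaI) auto
  also have "\<dots> \<le> (\<Sum>p\<in>{0..\<lfloor>M\<rfloor>}. l + 1)" by (rule sum_mono) (rule card_B)
  also have "\<dots> = (of_int \<lfloor>M\<rfloor> + 1) * (l + 1)" using \<open>0 \<le> M\<close> by simp
  also have "\<dots> \<le> (M + 1) * (l + 1)" using \<open>0 \<le> l\<close> by (intro mult_right_mono) auto
  finally show "card T \<le> (M + 1) * (l + 1)" .
qed

definition in_sector :: "real \<Rightarrow> real \<Rightarrow> real \<Rightarrow> real \<Rightarrow> real \<Rightarrow> bool" where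
  "in_sector \<alpha> \<beta> M u v \<longleftrightarrow> 0 < v \<and> \<alpha> * v \<le> u \<and> u \<le> \<beta> * v \<and> u + v \<le> M"

text \<open>In the coordinates \<open>u + v\<close>, \<open>u - v\<close> a sector of opening \<open>\<beta> - \<alpha>\<close> is a strip of width
  \<open>O(M (\<beta> - \<alpha>))\<close> above the line of slope \<open>(\<alpha> - 1) / (\<alpha> + 1)\<close>.\<close>
lemma in_sector_diff_bounds:
  assumes "in_sector \<alpha> \<beta> M u v" and "0 < \<alpha>"
  shows "(u + v) * ((\<alpha> - 1) / (\<alpha> + 1)) \<le> u - v"
    and "u - v \<le> (u + v) * ((\<alpha> - 1) / (\<alpha> + 1)) + 2 * M * (\<beta> - \<alpha>)"
proof -
  have v: "0 < v" "\<alpha> * v \<le> u" "u \<le> \<beta> * v" "u + v \<le> M"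
    using assms(1) by (auto simp: in_sector_def)
  have excess: "u - v - (u + v) * ((\<alpha> - 1) / (\<alpha> + 1)) = 2 * (u - \<alpha> * v) / (\<alpha> + 1)"
    using assms(2) by (simp add: field_simps)
  have "0 \<le> u - \<alpha> * v" using v by simp
  then have "0 \<le> 2 * (u - \<alpha> * v) / (\<alpha> + 1)" using assms(2) by simp
  then show "(u + v) * ((\<alpha> - 1) / (\<alpha> + 1)) \<le> u - v"
    using excess by linarith
  have "v \<le> M" using v assms(2) mult_pos_pos[of \<alpha> v] by linarith
  have "\<alpha> \<le> \<beta>" using mult_right_le_imp_le[of \<alpha> v \<beta>] v by linarith
  have "2 * (u - \<alpha> * v) / (\<alpha> + 1) \<le> 2 * (u - \<alpha> * v) / 1"
    using \<open>0 \<le> u - \<alpha> * v\<close> assms(2) by (intro divide_left_mono) auto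
  also have "\<dots> \<le> 2 * ((\<beta> - \<alpha>) * v)" using v by (simp add: algebra_simps)
  also have "\<dots> \<le> 2 * ((\<beta> - \<alpha>) * M)"
    using \<open>v \<le> M\<close> \<open>\<alpha> \<le> \<beta>\<close> by (intro mult_left_mono) auto
  also have "\<dots> = 2 * M * (\<beta> - \<alpha>)" by simp
  finally show "u - v \<le> (u + v) * ((\<alpha> - 1) / (\<alpha> + 1)) + 2 * M * (\<beta> - \<alpha>)"
    using excess by linarith
qed

lemma card_sector_lattice_le:
  fixes c1 c2 \<alpha> \<beta> M :: real
  assumes "1 \<le> c1" and "1 \<le> c2" and "0 < \<alpha>" and "\<alpha> \<le> \<beta>" and "0 \<le> M"
  defines "P \<equiv> {(m :: int, n :: int). in_sector \<alpha> \<beta> M ((m * c1 + n * c2) / 2) ((m * c1 - n * c2) / 2)}"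
  shows "finite P" and "card P \<le> (M + 1) * (2 * M * (\<beta> - \<alpha>) + 1)"
proof -
  define A where "A = (\<alpha> - 1) / (\<alpha> + 1)"
  define l where "l = 2 * M * (\<beta> - \<alpha>)"
  have "0 \<le> l" using assms by (simp add: l_def)
  have strip: "0 \<le> m \<and> m \<le> M \<and> m * c1 * A / c2 \<le> n \<and> n \<le> m * c1 * A / c2 + l"
    if "(m, n) \<in> P" for m n
  proof -
    define u v where "u = (m * c1 + n * c2) / 2" and "v = (m * c1 - n * c2) / 2"
    have sec: "in_sector \<alpha> \<beta> M u v" using that by (simp add: P_def u_def v_def)
    have uv: "u + v = m * c1" "u - v = n * c2" by (simp_all add: u_def v_def field_simps)
    have "0 < v" "\<alpha> * v \<le> u" "u + v \<le> M" and "0 < \<alpha> * v"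
      using sec assms(3) by (auto simp: in_sector_def)
    then have "0 \<le> m * c1" "m * c1 \<le> M" using uv by linarith+
    then have "0 \<le> m" and "m \<le> M"
      using assms(1) mult_left_mono[of 1 c1 "real_of_int m"] by (simp_all add: zero_le_mult_iff)
    moreover have "m * c1 * A / c2 \<le> n" and "n \<le> m * c1 * A / c2 + l"
    proof -
      have lo: "m * c1 * A \<le> n * c2" and hi: "n * c2 \<le> m * c1 * A + l"
        using in_sector_diff_bounds[OF sec assms(3)] uv by (simp_all add: A_def l_def)
      from lo show "m * c1 * A / c2 \<le> n" using assms(2) by (simp add: pos_divide_le_eq)
      from hi have "n \<le> (m * c1 * A + l) / c2" using assms(2) by (simp add: pos_le_divide_eq)
      moreover have "(m * c1 * A + l) / c2 = m * c1 * A / c2 + l / c2" by (rule add_divide_distrib)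
      moreover have "l / c2 \<le> l / 1" using assms(2) \<open>0 \<le> l\<close> by (intro divide_left_mono) auto
      ultimately show "n \<le> m * c1 * A / c2 + l" by simp
    qed
    ultimately show ?thesis by simp
  qed
  show "finite P" and "card P \<le> (M + 1) * (2 * M * (\<beta> - \<alpha>) + 1)"
    using card_lattice_strip_le[of P M "\<lambda>m. m * c1 * A / c2" l] strip \<open>0 \<le> l\<close> assms(5)
    by (auto simp: l_def)
qed

definition conj_ratio :: "int \<Rightarrow> real \<Rightarrow> real" where
  "conj_ratio d s = s / \<bar>qconj d s\<bar>"

lemma S_set_conj_ratio:
  assumes "s \<in> S_set d \<epsilon> x" and "\<epsilon> > 1"
  shows "0 < s" and "0 < \<bar>qconj d s\<bar>"
    and "1 / \<epsilon> < conj_ratio d s" and "conj_ratio d s \<le> \<epsilon>"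
    and "W d \<epsilon> s = ln (conj_ratio d s) / (2 * ln \<epsilon>)"
proof -
  have lo: "\<bar>qconj d s\<bar> / \<epsilon> < \<bar>s\<bar>" and hi: "\<bar>s\<bar> \<le> \<epsilon> * \<bar>qconj d s\<bar>" and "0 < s"
    using assms(1) unfolding S_set_def by auto
  then show "0 < s" and "0 < \<bar>qconj d s\<bar>" by auto
  with lo hi assms(2) show "1 / \<epsilon> < conj_ratio d s" and "conj_ratio d s \<le> \<epsilon>"
    by (simp_all add: conj_ratio_def field_simps)
  show "W d \<epsilon> s = ln (conj_ratio d s) / (2 * ln \<epsilon>)"
    using \<open>0 < s\<close> by (simp add: W_def conj_ratio_def abs_divide)
qed

text \<open>Since \<open>s \<bar>\<sigma>\<^sub>2(s)\<bar> \<le> x\<close> and the two factors agree up to the factor \<open>\<epsilon>\<close>, both are at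
  most \<open>sqrt (\<epsilon> x)\<close>.\<close>
lemma S_set_in_sector:
  assumes "s \<in> S_set d \<epsilon> x" and "\<epsilon> > 1"
    and "\<alpha> \<le> conj_ratio d s" and "conj_ratio d s \<le> \<beta>"
  shows "in_sector \<alpha> \<beta> (2 * sqrt (\<epsilon> * x)) s \<bar>qconj d s\<bar>"
proof -
  define v where "v = \<bar>qconj d s\<bar>"
  have s: "0 < s" "0 < v" "1 / \<epsilon> < s / v" "s / v \<le> \<epsilon>"
    using S_set_conj_ratio[OF assms(1,2)] by (simp_all add: v_def conj_ratio_def)
  have "s * v \<le> x"
    using assms(1) s by (simp add: S_set_def normK_def v_def abs_mult)
  have "s * s \<le> \<epsilon> * x"
  proof -
    have "s * s \<le> (\<epsilon> * v) * s" using s by (simp add: pos_divide_le_eq)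
    also have "\<dots> \<le> \<epsilon> * x" using \<open>s * v \<le> x\<close> assms(2) by (simp add: mult.assoc mult.commute)
    finally show ?thesis .
  qed
  moreover have "v * v \<le> \<epsilon> * x"
  proof -
    have "v * v \<le> (\<epsilon> * s) * v" using s assms(2) by (simp add: field_simps)
    also have "\<dots> \<le> \<epsilon> * x" using \<open>s * v \<le> x\<close> assms(2) by (simp add: mult.assoc mult.commute)
    finally show ?thesis .
  qed
  ultimately have "s \<le> sqrt (\<epsilon> * x)" and "v \<le> sqrt (\<epsilon> * x)"
    by (simp_all add: real_le_rsqrt power2_eq_square)
  moreover have "\<alpha> * v \<le> s" and "s \<le> \<beta> * v"
    using assms(3,4) s by (simp_all add: conj_ratio_def v_def pos_le_divide_eq pos_divide_le_eq)
  ultimately show ?thesis using s by (simp add: in_sector_def v_def)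
qed

lemma card_S_set_conj_ratio_le:
  assumes rq: "real_quadratic_field d" and "\<epsilon> > 1" and "x \<ge> 0"
    and "0 < \<alpha>" and "\<alpha> \<le> \<beta>"
  defines "A \<equiv> {s \<in> S_set d \<epsilon> x. \<alpha> \<le> conj_ratio d s \<and> conj_ratio d s \<le> \<beta>}"
  shows "finite A"
    and "card A \<le> 2 * (2 * sqrt (\<epsilon> * x) + 1) * (4 * sqrt (\<epsilon> * x) * (\<beta> - \<alpha>) + 1)"
proof -
  define M where "M = 2 * sqrt (\<epsilon> * x)"
  define r where "r = sqrt (real_of_int d)"
  define P where "P c1 c2 = {(m :: int, n :: int).
    in_sector \<alpha> \<beta> M ((m * c1 + n * c2) / 2) ((m * c1 - n * c2) / 2)}" for c1 c2
  define g1 where "g1 = (\<lambda>(m :: int, n :: int). (m + n * r) / 2)"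
  define g2 where "g2 = (\<lambda>(m :: int, n :: int). (n + m * r) / 2)"
  have "M \<ge> 0" using assms by (simp add: M_def)
  have "r \<ge> 1" using rq by (simp add: r_def real_quadratic_field_def)
  have card_P: "finite (P c1 c2)" "card (P c1 c2) \<le> (M + 1) * (2 * M * (\<beta> - \<alpha>) + 1)"
    if "1 \<le> c1" "1 \<le> c2" for c1 c2
    using card_sector_lattice_le[OF that assms(4,5) \<open>M \<ge> 0\<close>] by (simp_all add: P_def)
  text \<open>Depending on the sign of \<open>\<sigma>\<^sub>2(s)\<close>, the pair \<open>(s + \<bar>\<sigma>\<^sub>2(s)\<bar>, s - \<bar>\<sigma>\<^sub>2(s)\<bar>)\<close> is
    \<open>(p, q sqrt d)\<close> or \<open>(q sqrt d, p)\<close>.\<close>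
  have sub: "A \<subseteq> g1 ` P 1 r \<union> g2 ` P r 1"
  proof
    fix s assume "s \<in> A"
    then have sS: "s \<in> S_set d \<epsilon> x" and sec: "in_sector \<alpha> \<beta> M s \<bar>qconj d s\<bar>"
      using S_set_in_sector[OF _ assms(2)] by (auto simp: A_def M_def)
    obtain p q :: int where s: "s = (p + q * r) / 2" and s': "qconj d s = (p - q * r) / 2"
      using OK_half_integer_coords[OF rq] sS by (auto simp: S_set_def r_def)
    show "s \<in> g1 ` P 1 r \<union> g2 ` P r 1"
    proof (cases "qconj d s > 0")
      case True
      then have "\<bar>qconj d s\<bar> = (p - q * r) / 2" using s' by simp
      with sec have "(p, q) \<in> P 1 r" unfolding P_def s by simp
      then show ?thesis by (auto simp: g1_def s)
    next
      case False
      then have "\<bar>qconj d s\<bar> = (q * r - p) / 2" using s' by simp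
      with sec have "(q, p) \<in> P r 1" unfolding P_def s by (simp add: add.commute)
      then show ?thesis by (force simp: g2_def s)
    qed
  qed
  have fin: "finite (g1 ` P 1 r \<union> g2 ` P r 1)" using card_P \<open>r \<ge> 1\<close> by simp
  then show "finite A" using sub finite_subset by blast
  have "card A \<le> card (g1 ` P 1 r) + card (g2 ` P r 1)"
    using card_mono[OF fin sub] card_Un_le[of "g1 ` P 1 r" "g2 ` P r 1"] by linarith
  also have "\<dots> \<le> card (P 1 r) + card (P r 1)"
    by (intro add_mono card_image_le) (use card_P \<open>r \<ge> 1\<close> in simp_all)
  finally have "real (card A) \<le> card (P 1 r) + card (P r 1)" by linarith
  also have "\<dots> \<le> 2 * ((M + 1) * (2 * M * (\<beta> - \<alpha>) + 1))"
    using card_P(2)[of 1 r] card_P(2)[of r 1] \<open>r \<ge> 1\<close> by simp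
  also have "\<dots> = 2 * (2 * sqrt (\<epsilon> * x) + 1) * (4 * sqrt (\<epsilon> * x) * (\<beta> - \<alpha>) + 1)"
    by (simp add: M_def)
  finally show "card A \<le> 2 * (2 * sqrt (\<epsilon> * x) + 1) * (4 * sqrt (\<epsilon> * x) * (\<beta> - \<alpha>) + 1)" .
qed

lemma finite_S_set:
  assumes "real_quadratic_field d" and "\<epsilon> > 1" and "x \<ge> 0"
  shows "finite (S_set d \<epsilon> x)"
proof -
  have "1 / \<epsilon> \<le> 1" using assms(2) by simp
  then have "1 / \<epsilon> \<le> \<epsilon>" using assms(2) by linarith
  moreover have "S_set d \<epsilon> x = {s \<in> S_set d \<epsilon> x. 1 / \<epsilon> \<le> conj_ratio d s \<and> conj_ratio d s \<le> \<epsilon>}"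
    using S_set_conj_ratio[OF _ assms(2)] by (auto simp: less_imp_le)
  ultimately show ?thesis
    using card_S_set_conj_ratio_le(1)[OF assms, of "1 / \<epsilon>" \<epsilon>] assms(2) by simp
qed

lemma diff_le_mult_ln_diff:
  fixes \<alpha> \<beta> \<gamma> c :: real
  assumes "0 < \<alpha>" and "\<alpha> \<le> \<gamma>" and "\<gamma> \<le> c" and "\<gamma> \<le> \<beta>"
  shows "\<gamma> - \<alpha> \<le> c * (ln \<beta> - ln \<alpha>)"
proof -
  have "0 < \<gamma>" using assms by linarith
  have "ln \<alpha> - ln \<gamma> \<le> (\<alpha> - \<gamma>) / \<gamma>" using assms(1) \<open>0 < \<gamma>\<close> by (rule ln_diff_le)
  then have "\<gamma> - \<alpha> \<le> \<gamma> * (ln \<gamma> - ln \<alpha>)" using \<open>0 < \<gamma>\<close> by (simp add: field_simps)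
  also have "\<dots> \<le> c * (ln \<beta> - ln \<alpha>)"
    using assms \<open>0 < \<gamma>\<close> by (intro mult_mono) auto
  finally show ?thesis .
qed

lemma S_set_W_interval_conj_ratio:
  assumes "s \<in> S_set d \<epsilon> x" and "\<epsilon> > 1" and "a \<le> W d \<epsilon> s" and "W d \<epsilon> s \<le> b"
  shows "exp (2 * a * ln \<epsilon>) \<le> conj_ratio d s" and "conj_ratio d s \<le> min (exp (2 * b * ln \<epsilon>)) \<epsilon>"
proof -
  note r = S_set_conj_ratio[OF assms(1,2)]
  have "0 < conj_ratio d s" using r by (simp add: conj_ratio_def)
  moreover have "2 * a * ln \<epsilon> \<le> ln (conj_ratio d s)" and "ln (conj_ratio d s) \<le> 2 * b * ln \<epsilon>"
    using assms(2-4) r(5) by (simp_all add: pos_le_divide_eq pos_divide_le_eq mult.commute mult.left_commute)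
  ultimately show "exp (2 * a * ln \<epsilon>) \<le> conj_ratio d s" and "conj_ratio d s \<le> min (exp (2 * b * ln \<epsilon>)) \<epsilon>"
    using r(4) by (simp_all add: ln_ge_iff) (metis exp_le_cancel_iff exp_ln)
qed

definition W_count_const :: "real \<Rightarrow> real" where
  "W_count_const \<epsilon> = 48 * \<epsilon>\<^sup>2 * ln \<epsilon> + 6 * sqrt \<epsilon>"

lemma W_count_const_nonneg: "\<epsilon> \<ge> 1 \<Longrightarrow> W_count_const \<epsilon> \<ge> 0"
  by (simp add: W_count_const_def)

lemma card_S_set_W_interval_le:
  assumes rq: "real_quadratic_field d" and e: "\<epsilon> > 1" and x: "x \<ge> 1" and "a \<le> b"
  shows "card {s \<in> S_set d \<epsilon> x. a \<le> W d \<epsilon> s \<and> W d \<epsilon> s \<le> b} \<le> W_count_const \<epsilon> * (x * (b - a) + sqrt x)"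
proof -
  define B where "B = {s \<in> S_set d \<epsilon> x. a \<le> W d \<epsilon> s \<and> W d \<epsilon> s \<le> b}"
  define \<alpha> where "\<alpha> = exp (2 * a * ln \<epsilon>)"
  define \<beta> where "\<beta> = min (exp (2 * b * ln \<epsilon>)) \<epsilon>"
  define A where "A = {s \<in> S_set d \<epsilon> x. \<alpha> \<le> conj_ratio d s \<and> conj_ratio d s \<le> \<beta>}"
  define y where "y = sqrt (\<epsilon> * x)"
  have sub: "B \<subseteq> A"
    using S_set_W_interval_conj_ratio[OF _ e] by (auto simp: A_def B_def \<alpha>_def \<beta>_def)
  have "1 \<le> \<epsilon> * x" using mult_mono[of 1 \<epsilon> 1 x] e x by simp
  then have y: "1 \<le> y" "y * y = \<epsilon> * x" "y = sqrt \<epsilon> * sqrt x"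
    unfolding y_def by (simp_all del: real_sqrt_mult) (simp add: real_sqrt_mult)
  have rhs_nonneg: "0 \<le> W_count_const \<epsilon> * (x * (b - a) + sqrt x)"
    using W_count_const_nonneg[of \<epsilon>] e x \<open>a \<le> b\<close> by simp
  show ?thesis
  proof (cases "\<alpha> \<le> \<beta>")
    case False
    then have "A = {}" by (auto simp: A_def)
    then show ?thesis using sub rhs_nonneg by (simp add: B_def [symmetric] subset_empty)
  next
    case True
    define K where "K = 2 * \<epsilon> * (b - a) * ln \<epsilon>"
    have "0 \<le> K" using e \<open>a \<le> b\<close> by (simp add: K_def)
    have "\<beta> - \<alpha> \<le> \<epsilon> * (ln (exp (2 * b * ln \<epsilon>)) - ln \<alpha>)"
      using True by (intro diff_le_mult_ln_diff) (auto simp: \<alpha>_def \<beta>_def)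
    then have "\<beta> - \<alpha> \<le> K" by (simp add: \<alpha>_def K_def algebra_simps)
    have "real (card B) \<le> card A"
      using card_mono[OF _ sub] card_S_set_conj_ratio_le(1)[OF rq e _ _ True] x by (simp add: A_def \<alpha>_def)
    also have "\<dots> \<le> 2 * (2 * y + 1) * (4 * y * (\<beta> - \<alpha>) + 1)"
      using card_S_set_conj_ratio_le(2)[OF rq e _ _ True] x by (simp add: A_def \<alpha>_def y_def)
    also have "\<dots> \<le> 2 * (3 * y) * (4 * y * K + 1)"
    proof (rule mult_mono)
      show "4 * y * (\<beta> - \<alpha>) + 1 \<le> 4 * y * K + 1"
        using mult_left_mono[OF \<open>\<beta> - \<alpha> \<le> K\<close>, of "4 * y"] y(1) by simp
    qed (use y(1) True in auto)
    also have "\<dots> = 24 * (y * y) * K + 6 * y" by (simp add: algebra_simps)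
    also have "\<dots> = 48 * \<epsilon>\<^sup>2 * ln \<epsilon> * (x * (b - a)) + 6 * sqrt \<epsilon> * sqrt x"
      unfolding y(2) by (simp add: y(3) K_def power2_eq_square algebra_simps)
    also have "\<dots> \<le> W_count_const \<epsilon> * (x * (b - a) + sqrt x)"
      using e x \<open>a \<le> b\<close>
      by (simp add: W_count_const_def distrib_left distrib_right add_mono mult_right_mono)
    finally show ?thesis by (simp add: B_def)
  qed
qed

lemma abs_W_S_set_le:
  assumes "s \<in> S_set d \<epsilon> x" and "\<epsilon> > 1"
  shows "\<bar>W d \<epsilon> s\<bar> \<le> 1 / 2"
proof -
  note r = S_set_conj_ratio[OF assms]
  have "0 < conj_ratio d s" using r by (simp add: conj_ratio_def)
  then have "ln (1 / \<epsilon>) \<le> ln (conj_ratio d s)" and "ln (conj_ratio d s) \<le> ln \<epsilon>"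
    using r(3,4) assms(2) by simp_all
  then have "\<bar>ln (conj_ratio d s)\<bar> \<le> ln \<epsilon>" using assms(2) by (simp add: ln_div)
  then show ?thesis using r(5) assms(2) by (simp add: abs_divide pos_divide_le_eq)
qed

lemma dist_int_bounds: "0 \<le> dist_int y" "dist_int y \<le> 1 / 2"
  unfolding dist_int_def using of_int_round_abs_le[of y] by linarith+

text \<open>Since \<open>\<bar>W - \<theta>\<bar> \<le> 1\<close>, the condition \<open>dist_int (W - \<theta>) \<in> [a, b]\<close> puts \<open>W\<close> into one of six
  intervals \<open>\<theta> + n \<plusminus> [a, b]\<close> with \<open>n \<in> {-1, 0, 1}\<close>.\<close>
lemma card_S_set_dist_int_le:
  assumes rq: "real_quadratic_field d" and e: "\<epsilon> > 1" and x: "x \<ge> 1"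
    and "\<bar>\<theta>\<bar> \<le> 1 / 2" and "0 \<le> a" and "a \<le> b"
  shows "card {s \<in> S_set d \<epsilon> x. a \<le> dist_int (W d \<epsilon> s - \<theta>) \<and> dist_int (W d \<epsilon> s - \<theta>) \<le> b}
    \<le> 6 * W_count_const \<epsilon> * (x * (b - a) + sqrt x)"
proof -
  define D where "D = {s \<in> S_set d \<epsilon> x. a \<le> dist_int (W d \<epsilon> s - \<theta>) \<and> dist_int (W d \<epsilon> s - \<theta>) \<le> b}"
  define I where "I = {-1, 0, 1 :: int} \<times> (UNIV :: bool set)"
  define lo where "lo = (\<lambda>(n :: int, above). if above then \<theta> + n + a else \<theta> + n - b)"
  define A where "A i = {s \<in> S_set d \<epsilon> x. lo i \<le> W d \<epsilon> s \<and> W d \<epsilon> s \<le> lo i + (b - a)}" for i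
  have sub: "D \<subseteq> (\<Union>i\<in>I. A i)"
  proof
    fix s assume "s \<in> D"
    then have sS: "s \<in> S_set d \<epsilon> x" and "a \<le> dist_int (W d \<epsilon> s - \<theta>)" "dist_int (W d \<epsilon> s - \<theta>) \<le> b"
      by (auto simp: D_def)
    define n where "n = round (W d \<epsilon> s - \<theta>)"
    have "\<bar>W d \<epsilon> s - \<theta>\<bar> \<le> 1" using abs_W_S_set_le[OF sS e] \<open>\<bar>\<theta>\<bar> \<le> 1 / 2\<close> by linarith
    moreover have "\<bar>of_int n - (W d \<epsilon> s - \<theta>)\<bar> \<le> 1 / 2"
      unfolding n_def by (rule of_int_round_abs_le)
    ultimately have "\<bar>n\<bar> < 2" by linarith
    then have "n \<in> {-1, 0, 1}" by auto
    moreover have "s \<in> A (n, W d \<epsilon> s - \<theta> - n \<ge> 0)"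
      using sS \<open>a \<le> dist_int _\<close> \<open>dist_int _ \<le> b\<close>
      by (auto simp: A_def lo_def dist_int_def n_def [symmetric])
    ultimately show "s \<in> (\<Union>i\<in>I. A i)" by (auto simp: I_def)
  qed
  have "finite I" and "card I = 6" by (simp_all add: I_def card_cartesian_product)
  have "finite (\<Union>i\<in>I. A i)"
    using finite_S_set[OF rq e] x \<open>finite I\<close> by (auto simp: A_def)
  then have "real (card D) \<le> card (\<Union>i\<in>I. A i)" using card_mono[OF _ sub] by simp
  also have "\<dots> \<le> (\<Sum>i\<in>I. real (card (A i)))"
    using card_UN_le[OF \<open>finite I\<close>, of A] by (simp flip: of_nat_sum)
  also have "\<dots> \<le> (\<Sum>i\<in>I. W_count_const \<epsilon> * (x * (b - a) + sqrt x))"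
  proof (rule sum_mono)
    fix i
    show "real (card (A i)) \<le> W_count_const \<epsilon> * (x * (b - a) + sqrt x)"
      using card_S_set_W_interval_le[OF rq e x, of "lo i" "lo i + (b - a)"] \<open>a \<le> b\<close>
      by (simp add: A_def)
  qed
  also have "\<dots> = 6 * W_count_const \<epsilon> * (x * (b - a) + sqrt x)" using \<open>card I = 6\<close> by simp
  finally show ?thesis by (simp add: D_def)
qed

definition trunc_recip :: "real \<Rightarrow> real \<Rightarrow> real" where
  "trunc_recip Z \<tau> = (if \<tau> = 0 then ln Z else min (ln Z) (1 / (Z * \<tau>)))"

lemma T_Z_le_trunc_recip:
  assumes "Z \<ge> 2"
  shows "T_Z Z \<eta>1 \<eta>2 w \<le> trunc_recip Z (dist_int (w - \<eta>1 / 2)) + trunc_recip Z (dist_int (w - \<eta>2 / 2))"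
proof -
  define t1 t2 where "t1 = dist_int (w - \<eta>1 / 2)" and "t2 = dist_int (w - \<eta>2 / 2)"
  have "0 \<le> t1" "0 \<le> t2" "0 \<le> ln Z" using dist_int_bounds assms by (auto simp: t1_def t2_def)
  then have "0 \<le> trunc_recip Z t1" "0 \<le> trunc_recip Z t2"
    using assms by (simp_all add: trunc_recip_def)
  moreover have "min L (p + q) \<le> min L p + min L q" if "0 < p" "0 < q" "0 \<le> L" for L p q :: real
    using that by (simp add: min_def)
  ultimately show ?thesis
    using \<open>0 \<le> t1\<close> \<open>0 \<le> t2\<close> \<open>0 \<le> ln Z\<close> assms
    by (auto simp: T_Z_def trunc_recip_def t1_def [symmetric] t2_def [symmetric])
qed

lemma trunc_recip_le_level_sum:
  assumes "Z \<ge> 2" and "0 \<le> \<tau>" and "\<tau> \<le> 1 / 2"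
  shows "trunc_recip Z \<tau> \<le> (if \<tau> \<le> 1 / Z then ln Z else 0)
     + (\<Sum>k=1..nat \<lceil>Z\<rceil>. if k / Z \<le> \<tau> \<and> \<tau> \<le> (k + 1) / Z then inverse (real k) else 0)"
    (is "_ \<le> _ + (\<Sum>k=1..nat \<lceil>Z\<rceil>. ?f k)")
proof (cases "\<tau> \<le> 1 / Z")
  case True
  have "trunc_recip Z \<tau> \<le> ln Z" by (simp add: trunc_recip_def)
  moreover have "0 \<le> (\<Sum>k=1..nat \<lceil>Z\<rceil>. ?f k)" by (intro sum_nonneg) auto
  ultimately show ?thesis using True by simp
next
  case False
  have "0 < Z" using assms(1) by simp
  then have "1 < Z * \<tau>" using False by (simp add: field_simps)
  define k where "k = nat \<lfloor>Z * \<tau>\<rfloor>"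
  have k: "real k \<le> Z * \<tau>" "Z * \<tau> < real k + 1" "1 \<le> k"
    using \<open>1 < Z * \<tau>\<close> by (simp_all add: k_def) linarith+
  have "Z * \<tau> \<le> Z" using assms \<open>0 < Z\<close> by (simp add: mult_left_le)
  then have "k \<le> nat \<lceil>Z\<rceil>" using k by linarith
  have "trunc_recip Z \<tau> \<le> 1 / (Z * \<tau>)" using \<open>1 < Z * \<tau>\<close> by (auto simp: trunc_recip_def)
  also have "\<dots> \<le> inverse (real k)" using k by (simp add: inverse_eq_divide frac_le)
  also have "\<dots> = ?f k" using k \<open>0 < Z\<close> by (simp add: pos_divide_le_eq pos_le_divide_eq mult.commute)
  also have "\<dots> \<le> (\<Sum>k=1..nat \<lceil>Z\<rceil>. ?f k)"
    by (rule member_le_sum) (use k \<open>k \<le> nat \<lceil>Z\<rceil>\<close> in auto)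
  finally show ?thesis using False by simp
qed

lemma harm_le_one_plus_ln:
  assumes "n \<ge> 1"
  shows "harm n \<le> 1 + ln (real n)"
proof -
  have "harm 1 = (1 :: real)" by (simp add: harm_def)
  then show ?thesis using euler_mascheroni_sequence_decreasing[of 1 n] assms by simp
qed

lemma ln_plus_harm_ceiling_le:
  fixes Z :: real
  assumes Z: "Z \<ge> 2"
  shows "ln Z + harm (nat \<lceil>Z\<rceil>) \<le> 5 * ln Z"
proof -
  define K where "K = nat \<lceil>Z\<rceil>"
  have "1 \<le> K" "real K \<le> 2 * Z" using Z by (simp_all add: K_def) linarith+
  then have "ln (real K) \<le> ln (2 * Z)" by simp
  also have "\<dots> = ln 2 + ln Z" using Z by (simp add: ln_mult)
  finally have "ln (real K) \<le> ln 2 + ln Z" .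
  moreover have "ln 2 \<le> ln Z" using Z by simp
  ultimately show ?thesis
    using harm_le_one_plus_ln[OF \<open>1 \<le> K\<close>] ln2_ge_two_thirds by (simp add: K_def)
qed

lemma sum_trunc_recip_le:
  fixes \<tau> :: "'a \<Rightarrow> real" and N :: real
  assumes "finite S" and Z: "Z \<ge> 2" and \<tau>: "\<And>s. s \<in> S \<Longrightarrow> 0 \<le> \<tau> s \<and> \<tau> s \<le> 1 / 2"
    and window: "\<And>a. 0 \<le> a \<Longrightarrow> card {s \<in> S. a \<le> \<tau> s \<and> \<tau> s \<le> a + 1 / Z} \<le> N"
  shows "(\<Sum>s\<in>S. trunc_recip Z (\<tau> s)) \<le> 5 * N * ln Z"
proof -
  define K where "K = nat \<lceil>Z\<rceil>"
  have "0 < Z" "0 < ln Z" using Z by simp_all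
  have "0 \<le> N" using window[OF order_refl] of_nat_0_le_iff order_trans by blast
  have indicator_sum: "(\<Sum>s\<in>S. if P s then c else 0) \<le> c * N"
    if "0 \<le> c" and "\<And>s. s \<in> S \<Longrightarrow> P s \<Longrightarrow> a \<le> \<tau> s \<and> \<tau> s \<le> a + 1 / Z" and "0 \<le> a" for P c a
  proof -
    have "(\<Sum>s\<in>S. if P s then c else 0) = c * card {s \<in> S. P s}"
      using \<open>finite S\<close> by (simp add: sum.If_cases Int_def)
    also have "\<dots> \<le> c * card {s \<in> S. a \<le> \<tau> s \<and> \<tau> s \<le> a + 1 / Z}"
      using that \<open>finite S\<close> by (intro mult_left_mono) (auto intro: card_mono)
    also have "\<dots> \<le> c * N" using window[OF \<open>0 \<le> a\<close>] \<open>0 \<le> c\<close> by (rule mult_left_mono)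
    finally show ?thesis .
  qed
  have "(\<Sum>s\<in>S. trunc_recip Z (\<tau> s)) \<le> (\<Sum>s\<in>S. (if \<tau> s \<le> 1 / Z then ln Z else 0)
     + (\<Sum>k=1..K. if k / Z \<le> \<tau> s \<and> \<tau> s \<le> (k + 1) / Z then inverse (real k) else 0))"
    unfolding K_def using \<tau> by (intro sum_mono trunc_recip_le_level_sum[OF Z]) auto
  also have "\<dots> = (\<Sum>s\<in>S. if \<tau> s \<le> 1 / Z then ln Z else 0)
     + (\<Sum>k=1..K. \<Sum>s\<in>S. if k / Z \<le> \<tau> s \<and> \<tau> s \<le> (k + 1) / Z then inverse (real k) else 0)"
    by (simp add: sum.distrib sum.swap[of _ S])
  also have "\<dots> \<le> ln Z * N + (\<Sum>k=1..K. inverse (real k) * N)"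
  proof (rule add_mono)
    show "(\<Sum>s\<in>S. if \<tau> s \<le> 1 / Z then ln Z else 0) \<le> ln Z * N"
      using \<tau> \<open>0 < ln Z\<close> by (intro indicator_sum[of _ _ 0]) auto
    show "(\<Sum>k=1..K. \<Sum>s\<in>S. if k / Z \<le> \<tau> s \<and> \<tau> s \<le> (k + 1) / Z then inverse (real k) else 0)
        \<le> (\<Sum>k=1..K. inverse (real k) * N)"
      by (intro sum_mono indicator_sum[of _ _ "_ / Z"])
         (use \<open>0 < Z\<close> in \<open>auto simp: add_divide_distrib\<close>)
  qed
  also have "\<dots> = N * (ln Z + harm K)"
    by (simp add: harm_def sum_distrib_left algebra_simps)
  also have "\<dots> \<le> N * (5 * ln Z)"
    unfolding K_def using ln_plus_harm_ceiling_le[OF Z] \<open>0 \<le> N\<close> by (rule mult_left_mono)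
  finally show ?thesis by (simp add: mult_ac)
qed

lemma sum_trunc_recip_dist_int_W_le:
  assumes rq: "real_quadratic_field d" and e: "\<epsilon> > 1" and x: "x \<ge> 1" and Z: "Z \<ge> 2"
    and "\<bar>\<theta>\<bar> \<le> 1 / 2"
  shows "(\<Sum>s\<in>S_set d \<epsilon> x. trunc_recip Z (dist_int (W d \<epsilon> s - \<theta>)))
    \<le> 30 * W_count_const \<epsilon> * (x / Z + sqrt x) * ln Z"
proof -
  have "(\<Sum>s\<in>S_set d \<epsilon> x. trunc_recip Z (dist_int (W d \<epsilon> s - \<theta>)))
    \<le> 5 * (6 * W_count_const \<epsilon> * (x / Z + sqrt x)) * ln Z"
  proof (rule sum_trunc_recip_le)
    show "finite (S_set d \<epsilon> x)" using finite_S_set[OF rq e] x by simp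
    show "card {s \<in> S_set d \<epsilon> x. a \<le> dist_int (W d \<epsilon> s - \<theta>) \<and> dist_int (W d \<epsilon> s - \<theta>) \<le> a + 1 / Z}
      \<le> 6 * W_count_const \<epsilon> * (x / Z + sqrt x)" if "0 \<le> a" for a
      using card_S_set_dist_int_le[OF rq e x \<open>\<bar>\<theta>\<bar> \<le> 1 / 2\<close> that, of "a + 1 / Z"] Z by simp
  qed (use Z dist_int_bounds in auto)
  then show ?thesis by simp
qed

lemma sum_T_Z_S_set_le:
  assumes rq: "real_quadratic_field d" and e: "\<epsilon> > 1" and x: "x \<ge> 1" and Z: "Z \<ge> 2"
    and "-1 \<le> \<eta>1" "\<eta>1 \<le> 1" "-1 \<le> \<eta>2" "\<eta>2 \<le> 1"
  shows "(\<Sum>s\<in>S_set d \<epsilon> x. T_Z Z \<eta>1 \<eta>2 (W d \<epsilon> s)) \<le> 60 * W_count_const \<epsilon> * (x / Z + sqrt x) * ln Z"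
proof -
  have "(\<Sum>s\<in>S_set d \<epsilon> x. T_Z Z \<eta>1 \<eta>2 (W d \<epsilon> s))
     \<le> (\<Sum>s\<in>S_set d \<epsilon> x. trunc_recip Z (dist_int (W d \<epsilon> s - \<eta>1 / 2)))
       + (\<Sum>s\<in>S_set d \<epsilon> x. trunc_recip Z (dist_int (W d \<epsilon> s - \<eta>2 / 2)))"
    unfolding sum.distrib[symmetric] by (intro sum_mono T_Z_le_trunc_recip Z)
  also have "\<dots> \<le> 30 * W_count_const \<epsilon> * (x / Z + sqrt x) * ln Z
      + 30 * W_count_const \<epsilon> * (x / Z + sqrt x) * ln Z"
    using assms by (intro add_mono sum_trunc_recip_dist_int_W_le) auto
  finally show ?thesis by (simp add: mult_ac)
qed

lemma mult_ln_div_le: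
  fixes x Z :: real
  assumes "x \<ge> 1" and "Z \<ge> 1"
  shows "x * ln Z / Z \<le> ln Z + 2 * (x * ln x / Z)"
proof (cases "Z \<le> x\<^sup>2")
  case True
  then have "ln Z \<le> 2 * ln x" using assms by (simp add: ln_realpow flip: ln_le_cancel_iff)
  then have "x * ln Z / Z \<le> 2 * (x * ln x / Z)"
    using assms by (simp add: divide_right_mono mult_left_mono)
  moreover have "0 \<le> ln Z" using assms by simp
  ultimately show ?thesis by linarith
next
  case False
  moreover have "x \<le> x\<^sup>2" using mult_left_mono[of 1 x x] assms by (simp add: power2_eq_square)
  ultimately have "x \<le> Z" by linarith
  then have "x * ln Z / Z \<le> ln Z"
    using mult_right_mono[of x Z "ln Z"] assms by (simp add: pos_divide_le_eq mult.commute)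
  moreover have "0 \<le> x * ln x / Z" using assms by simp
  ultimately show ?thesis by linarith
qed

lemma sqrt_plus_div_mult_ln_le:
  fixes x Z \<delta> :: real
  assumes x: "x \<ge> 2" and Z: "Z \<ge> 2" and "\<delta> > 0"
  shows "(x / Z + sqrt x) * ln Z \<le> 2 * x powr (1 / 2 + \<delta>) * (ln Z + x * ln x / Z)"
proof -
  define P where "P = x powr (1 / 2 + \<delta>)"
  have "sqrt x \<le> P" using assms by (simp add: P_def powr_half_sqrt [symmetric] powr_mono)
  moreover have "1 \<le> sqrt x" using x by simp
  ultimately have "1 \<le> P" by linarith
  have "0 \<le> ln Z" "0 \<le> x * ln x / Z" using x Z by simp_all
  have "(x / Z + sqrt x) * ln Z = x * ln Z / Z + sqrt x * ln Z" by (simp add: algebra_simps)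
  also have "\<dots> \<le> (ln Z + 2 * (x * ln x / Z)) + P * ln Z"
    using mult_ln_div_le[of x Z] \<open>sqrt x \<le> P\<close> \<open>0 \<le> ln Z\<close> x Z by (intro add_mono mult_right_mono) auto
  also have "\<dots> \<le> (P * ln Z + 2 * (P * (x * ln x / Z))) + P * ln Z"
    using mult_right_mono[OF \<open>1 \<le> P\<close> \<open>0 \<le> ln Z\<close>]
      mult_right_mono[OF \<open>1 \<le> P\<close> \<open>0 \<le> x * ln x / Z\<close>] by linarith
  also have "\<dots> = 2 * P * (ln Z + x * ln x / Z)" by (simp add: algebra_simps)
  finally show ?thesis by (simp add: P_def)
qed

lemma mult_powr_ln_le_powr:
  fixes x \<delta> C :: real
  assumes "x \<ge> 1" and "\<delta> > 0" and "C \<ge> 0"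
  shows "C * x powr (1/2 + \<delta>) * (2 * ln x) \<le> 2 * C / \<delta> * x powr (1/2 + 2 * \<delta>)"
proof -
  have "2 * ln x \<le> 2 * (x powr \<delta> / \<delta>)"
    using ln_powr_bound[of x \<delta>] assms by simp
  then have "C * x powr (1/2 + \<delta>) * (2 * ln x) \<le> C * x powr (1/2 + \<delta>) * (2 * (x powr \<delta> / \<delta>))"
    using assms by (intro mult_left_mono) auto
  also have "\<dots> = 2 * C / \<delta> * x powr (1/2 + 2 * \<delta>)"
    by (simp add: powr_add [symmetric] algebra_simps)
  finally show ?thesis .
qed

theorem mainTheorem5:
  fixes d :: int and \<epsilon> \<delta> :: real
  assumes "real_quadratic_field d" and "class_number_one d"
    and "is_fundamental_unit d \<epsilon>" and "\<delta> > 0"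
  shows "(\<exists>C. \<forall>\<eta>1 \<eta>2 x Z. -1 \<le> \<eta>1 \<longrightarrow> \<eta>1 < \<eta>2 \<longrightarrow> \<eta>2 \<le> 1 \<longrightarrow> x \<ge> 2 \<longrightarrow> Z \<ge> 2 \<longrightarrow>
            (\<Sum>s\<in>S_set d \<epsilon> x. T_Z Z \<eta>1 \<eta>2 (W d \<epsilon> s))
              \<le> C * x powr (1/2 + \<delta>) * (ln Z + x * ln x / Z))
       \<and> (\<exists>C. \<forall>\<eta>1 \<eta>2 x. -1 \<le> \<eta>1 \<longrightarrow> \<eta>1 < \<eta>2 \<longrightarrow> \<eta>2 \<le> 1 \<longrightarrow> x \<ge> 2 \<longrightarrow>
            (\<Sum>s\<in>S_set d \<epsilon> x. T_Z x \<eta>1 \<eta>2 (W d \<epsilon> s)) \<le> C * x powr (1/2 + 2 * \<delta>))"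
proof -
  have e: "\<epsilon> > 1" using assms(3) by (simp add: is_fundamental_unit_def)
  define C where "C = 120 * W_count_const \<epsilon>"
  have "0 \<le> C" using W_count_const_nonneg[of \<epsilon>] e by (simp add: C_def)
  have bound: "(\<Sum>s\<in>S_set d \<epsilon> x. T_Z Z \<eta>1 \<eta>2 (W d \<epsilon> s)) \<le> C * x powr (1/2 + \<delta>) * (ln Z + x * ln x / Z)"
    if "-1 \<le> \<eta>1" "\<eta>1 < \<eta>2" "\<eta>2 \<le> 1" "x \<ge> 2" "Z \<ge> 2" for \<eta>1 \<eta>2 x Z
  proof -
    have "(\<Sum>s\<in>S_set d \<epsilon> x. T_Z Z \<eta>1 \<eta>2 (W d \<epsilon> s)) \<le> C / 2 * ((x / Z + sqrt x) * ln Z)"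
      using sum_T_Z_S_set_le[OF assms(1) e, of x Z \<eta>1 \<eta>2] that by (simp add: C_def)
    also have "\<dots> \<le> C / 2 * (2 * x powr (1/2 + \<delta>) * (ln Z + x * ln x / Z))"
      using sqrt_plus_div_mult_ln_le[OF that(4,5) assms(4)] \<open>0 \<le> C\<close> by (intro mult_left_mono) auto
    finally show ?thesis by simp
  qed
  have "(\<Sum>s\<in>S_set d \<epsilon> x. T_Z x \<eta>1 \<eta>2 (W d \<epsilon> s)) \<le> 2 * C / \<delta> * x powr (1/2 + 2 * \<delta>)"
    if "-1 \<le> \<eta>1" "\<eta>1 < \<eta>2" "\<eta>2 \<le> 1" "x \<ge> 2" for \<eta>1 \<eta>2 x
    using bound[OF that that(4)] mult_powr_ln_le_powr[of x \<delta> C] that(4) assms(4) \<open>0 \<le> C\<close>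
    by simp
  with bound show ?thesis by blast
qed

end
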